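(* Let $r\ge1$ and $m\in\{0,1,\dots,5\}$, and let $A=6r^2+2mr+(m-2)\mathbb 1_{\{m>0\}}$. Then every polyiamond of area $A$ whose edge-perimeter is minimal among polyiamonds of area $A$ is a quasi-regular hexagon.
   Context: Faces are the closed triangular faces of the triangular lattice $\mathbb T^2$ in $\mathbb R^2$. A polyiamond $P$ is a finite nonempty union of faces that is connected through shared edges (two faces sharing only a vertex are not adjacent); faces not in $P$ are empty faces. Its area $\|P\|$ is the number of its faces; its edge-perimeter $p(P)$ is the number of edges of $\mathbb T^2$ separating a face of $P$ from an empty face; its site-perimeter $s(P)$ is the number of empty faces sharing at least one edge with a face of $P$. For integers $d\ge1$, $a,b,c\ge0$ with $a+b,b+c,c+a\le d$, $T^d_{a,b,c}$ is the polyiamond obtained from an equilateral triangle of side length $d$ with sides on lattice lines (the union of its $d^2$ faces) by removing the equilateral sub-triangles of side lengths $a,b,c$ at its three corners; its boundary is a (possibly degenerate) hexagon with side lengths, in cyclic order, $a,\ d-a-b,\ b,\ d-b-c,\ c,\ d-c-a$, its area is $d^2-a^2-b^2-c^2$ and its edge- and site-perimeter equal $3d-a-b-c$. Quasi-regular hexagons: for $r\ge1$ let $E(r)=T^{3r}_{r,r,r}$ (regular hexagon of side $r$), $E_{B_1}(r)=T^{3r}_{r-1,r,r}$, $E_{B_2}(r)=T^{3r+1}_{r,r,r+1}$, $E_{B_3}(r)=T^{3r+1}_{r,r,r}$, $E_{B_4}(r)=T^{3r+2}_{r,r+1,r+1}$, $E_{B_5}(r)=T^{3r+2}_{r,r,r+1}$.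 Their areas are $6r^2,\ 6r^2+2r-1,\ 6r^2+4r,\ 6r^2+6r+1,\ 6r^2+8r+2,\ 6r^2+10r+3$, and their edge-perimeters are $6r,6r+1,\dots,6r+5$. A quasi-regular hexagon is any image of one of these under a symmetry (translation, rotation, reflection) of $\mathbb T^2$; $\mathcal Q$ denotes the set of all quasi-regular hexagons. *)

theory Defs
  imports Main
begin

text \<open>Lattice points of the triangular lattice are written in the basis
  e1 = (1,0), e2 = (1/2, sqrt 3 / 2): the pair (a,b) denotes a*e1 + b*e2.\<close>

type_synonym pt = "int \<times> int"
type_synonym face = "pt set"

definition up_face :: "int \<Rightarrow> int \<Rightarrow> face" where
  "up_face a b = {(a,b), (a+1,b), (a,b+1)}"

definition down_face :: "int \<Rightarrow> int \<Rightarrow> face" where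
  "down_face a b = {(a+1,b), (a,b+1), (a+1,b+1)}"

definition is_face :: "face \<Rightarrow> bool" where
  "is_face F \<longleftrightarrow> (\<exists>a b. F = up_face a b \<or> F = down_face a b)"

text \<open>Two faces are adjacent iff they share an edge, i.e. exactly two vertices.\<close>
definition adjacent :: "face \<Rightarrow> face \<Rightarrow> bool" where
  "adjacent F G \<longleftrightarrow> is_face F \<and> is_face G \<and> card (F \<inter> G) = 2"

definition polyiamond :: "face set \<Rightarrow> bool" where
  "polyiamond P \<longleftrightarrow> finite P \<and> P \<noteq> {} \<and> (\<forall>F\<in>P. is_face F) \<and>
     (\<forall>F\<in>P. \<forall>G\<in>P. (F, G) \<in> {(X, Y). X \<in> P \<and> Y \<in> P \<and> adjacent X Y}\<^sup>*)"

definition area :: "face set \<Rightarrow> nat" where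
  "area P = card P"

definition edge_perimeter :: "face set \<Rightarrow> nat" where
  "edge_perimeter P = card {F \<inter> G | F G. F \<in> P \<and> G \<notin> P \<and> adjacent F G}"

text \<open>Squared Euclidean distance between lattice points.\<close>
definition sqdist :: "pt \<Rightarrow> pt \<Rightarrow> int" where
  "sqdist p q = (let a = fst p - fst q; b = snd p - snd q in a*a + a*b + b*b)"

definition lattice_symmetry :: "(pt \<Rightarrow> pt) \<Rightarrow> bool" where
  "lattice_symmetry g \<longleftrightarrow> bij g \<and> (\<forall>p q. sqdist (g p) (g q) = sqdist p q)"

text \<open>T^d_{a,b,c}: triangle with vertices (0,0), (d,0), (0,d), with corner triangles of side
  a at (0,0), b at (d,0), c at (0,d) removed.\<close>
definition T :: "int \<Rightarrow> int \<Rightarrow> int \<Rightarrow> int \<Rightarrow> face set" where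
  "T d a b c =
     {up_face x y | x y. 0 \<le> x \<and> 0 \<le> y \<and> x \<le> d - b - 1 \<and> y \<le> d - c - 1 \<and>
                         a \<le> x + y \<and> x + y \<le> d - 1} \<union>
     {down_face x y | x y. 0 \<le> x \<and> 0 \<le> y \<and> x \<le> d - b - 1 \<and> y \<le> d - c - 1 \<and>
                         a - 1 \<le> x + y \<and> x + y \<le> d - 2}"

definition E0 :: "nat \<Rightarrow> face set" where "E0 r = T (3*int r) (int r) (int r) (int r)"
definition EB1 :: "nat \<Rightarrow> face set" where "EB1 r = T (3*int r) (int r - 1) (int r) (int r)"
definition EB2 :: "nat \<Rightarrow> face set" where "EB2 r = T (3*int r + 1) (int r) (int r) (int r + 1)"
definition EB3 :: "nat \<Rightarrow> face set" where "EB3 r = T (3*int r + 1) (int r) (int r) (int r)"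
definition EB4 :: "nat \<Rightarrow> face set" where "EB4 r = T (3*int r + 2) (int r) (int r + 1) (int r + 1)"
definition EB5 :: "nat \<Rightarrow> face set" where "EB5 r = T (3*int r + 2) (int r) (int r) (int r + 1)"

definition quasi_regular :: "face set \<Rightarrow> bool" where
  "quasi_regular P \<longleftrightarrow> (\<exists>r\<ge>1. \<exists>g. lattice_symmetry g \<and>
      (\<exists>H \<in> {E0 r, EB1 r, EB2 r, EB3 r, EB4 r, EB5 r}. P = (\<lambda>F. g ` F) ` H))"

end

theory Submission
  imports Defs
begin

text \<open>The extreme lattice lines met by a polyiamond P in the three edge directions cut out a
  hexagon T d a b c containing P. Every strip between consecutive parallel lines met by P carries
  two boundary edges of P, which gives p(P) \<ge> 3d - a - b - c, while |P| \<le> d^2 - a^2 - b^2 - c^2.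
  The quasi-regular hexagon of area A has perimeter 6r + m, so a minimal P has p(P) \<le> 6r + m, and
  the isoperimetric inequality 6 (d^2 - a^2 - b^2 - c^2) \<le> (3d - a - b - c)^2 forces
  3d - a - b - c = 6r + m. Normalising a \<le> b \<le> c \<le> d - a - b by lattice symmetries, a
  Cauchy-Schwarz estimate leaves only the parameters of the quasi-regular hexagon, whose area is
  exactly A; hence P fills its bounding hexagon.\<close>

subsection \<open>Faces and adjacency\<close>

lemma finite_up_face [simp]: "finite (up_face a b)"
  and finite_down_face [simp]: "finite (down_face a b)"
  by (simp_all add: up_face_def down_face_def)

lemma is_face_up_face [simp]: "is_face (up_face a b)"
  and is_face_down_face [simp]: "is_face (down_face a b)"
  unfolding is_face_def by blast+

lemma is_faceE:
  assumes "is_face F"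
  obtains a b where "F = up_face a b" | a b where "F = down_face a b"
  using assms unfolding is_face_def by blast

lemma finite_face: "is_face F \<Longrightarrow> finite F"
  by (erule is_faceE) auto

lemma up_face_eq_iff [simp]: "up_face a b = up_face c d \<longleftrightarrow> a = c \<and> b = d"
proof
  assume eq: "up_face a b = up_face c d"
  have "(a,b) \<in> up_face a b" "(c,d) \<in> up_face c d" by (simp_all add: up_face_def)
  then have "(a,b) \<in> up_face c d" "(c,d) \<in> up_face a b" by (simp_all add: eq)
  then show "a = c \<and> b = d" unfolding up_face_def by simp linarith
qed simp

lemma down_face_eq_iff [simp]: "down_face a b = down_face c d \<longleftrightarrow> a = c \<and> b = d"
proof
  assume eq: "down_face a b = down_face c d"
  have "(a+1,b+1) \<in> down_face a b" "(c+1,d+1) \<in> down_face c d" by (simp_all add: down_face_def)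
  then have "(a+1,b+1) \<in> down_face c d" "(c+1,d+1) \<in> down_face a b" by (simp_all add: eq)
  then show "a = c \<and> b = d" unfolding down_face_def by simp linarith
qed simp

lemma up_face_neq_down_face [simp]: "up_face a b \<noteq> down_face c d" "down_face c d \<noteq> up_face a b"
proof -
  show "up_face a b \<noteq> down_face c d"
  proof
    assume "up_face a b = down_face c d"
    then have "{(a,b), (a+1,b), (a,b+1)} \<subseteq> down_face c d" by (simp add: up_face_def)
    then show False unfolding down_face_def by auto
  qed
  then show "down_face c d \<noteq> up_face a b" by metis
qed

definition hor :: "int \<Rightarrow> int \<Rightarrow> pt set" where "hor x y = {(x,y), (x+1,y)}"
definition ver :: "int \<Rightarrow> int \<Rightarrow> pt set" where "ver x y = {(x,y), (x,y+1)}"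
definition ant :: "int \<Rightarrow> int \<Rightarrow> pt set" where "ant x y = {(x+1,y), (x,y+1)}"

lemma edge_eq_iff [simp]:
  "hor x y = hor x' y' \<longleftrightarrow> x = x' \<and> y = y'"
  "ver x y = ver x' y' \<longleftrightarrow> x = x' \<and> y = y'"
  "ant x y = ant x' y' \<longleftrightarrow> x = x' \<and> y = y'"
  "hor x y \<noteq> ver x' y'" "hor x y \<noteq> ant x' y'" "ver x y \<noteq> ant x' y'"
  "ver x y \<noteq> hor x' y'" "ant x y \<noteq> hor x' y'" "ant x y \<noteq> ver x' y'"
  unfolding hor_def ver_def ant_def by (auto simp: doubleton_eq_iff)

lemma card_edge [simp]: "card (hor x y) = 2" "card (ver x y) = 2" "card (ant x y) = 2"
  unfolding hor_def ver_def ant_def by simp_all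

lemma face_inter_face:
  "up_face x y \<inter> down_face x y = ant x y" "up_face x y \<inter> down_face (x-1) y = ver x y"
  "up_face x y \<inter> down_face x (y-1) = hor x y" "down_face x y \<inter> up_face x y = ant x y"
  "down_face x y \<inter> up_face (x+1) y = ver (x+1) y" "down_face x y \<inter> up_face x (y+1) = hor x (y+1)"
  unfolding up_face_def down_face_def ant_def ver_def hor_def by auto

lemma card_up_face_inter_up_face:
  "(a, b) \<noteq> (c, d) \<Longrightarrow> card (up_face a b \<inter> up_face c d) \<le> 1"
  unfolding up_face_def by (auto simp: card_le_Suc0_iff_eq)

lemma card_up_face_inter_down_face:
  "(c, d) \<notin> {(a, b), (a-1, b), (a, b-1)} \<Longrightarrow> card (up_face a b \<inter> down_face c d) \<le> 1"
  unfolding up_face_def down_face_def by (auto simp: card_le_Suc0_iff_eq)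

lemma card_down_face_inter_down_face:
  "(a, b) \<noteq> (c, d) \<Longrightarrow> card (down_face a b \<inter> down_face c d) \<le> 1"
  unfolding down_face_def by (auto simp: card_le_Suc0_iff_eq)

lemma adjacent_commute: "adjacent F G \<longleftrightarrow> adjacent G F"
  unfolding adjacent_def by (auto simp: Int_commute)

lemma adjacent_up_face_iff:
  "adjacent (up_face a b) G \<longleftrightarrow> G = down_face a b \<or> G = down_face (a-1) b \<or> G = down_face a (b-1)"
proof
  assume adj: "adjacent (up_face a b) G"
  then have "is_face G" and card2: "card (up_face a b \<inter> G) = 2" unfolding adjacent_def by simp_all
  then show "G = down_face a b \<or> G = down_face (a-1) b \<or> G = down_face a (b-1)"
  proof (cases rule: is_faceE)
    case (1 c d)
    have "card (up_face a b) = 3" by (simp add: up_face_def)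
    then show ?thesis using card2 1 card_up_face_inter_up_face[of a b c d] by fastforce
  next
    case (2 c d)
    then show ?thesis using card2 card_up_face_inter_down_face[of c d a b] by fastforce
  qed
next
  assume "G = down_face a b \<or> G = down_face (a-1) b \<or> G = down_face a (b-1)"
  then show "adjacent (up_face a b) G" unfolding adjacent_def by (auto simp: face_inter_face)
qed

lemma adjacent_down_face_iff:
  "adjacent (down_face a b) G \<longleftrightarrow> G = up_face a b \<or> G = up_face (a+1) b \<or> G = up_face a (b+1)"
proof
  assume adj: "adjacent (down_face a b) G"
  then have "is_face G" unfolding adjacent_def by simp
  then show "G = up_face a b \<or> G = up_face (a+1) b \<or> G = up_face a (b+1)"
  proof (cases rule: is_faceE)
    case (1 c d)
    then have "adjacent (up_face c d) (down_face a b)" using adj adjacent_commute by blast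
    then show ?thesis using 1 unfolding adjacent_up_face_iff by auto
  next
    case (2 c d)
    have "card (down_face a b) = 3" by (simp add: down_face_def)
    then show ?thesis using adj 2 card_down_face_inter_down_face[of a b c d]
      unfolding adjacent_def by fastforce
  qed
next
  assume "G = up_face a b \<or> G = up_face (a+1) b \<or> G = up_face a (b+1)"
  then show "adjacent (down_face a b) G"
    using adjacent_commute adjacent_up_face_iff by auto
qed

subsection \<open>Strips and a lower bound for the perimeter\<close>

text \<open>Each face lies in one strip between consecutive parallel lattice lines
  x = t, x = t + 1 (resp. y = t, y = t + 1 and x + y = t, x + y = t + 1).\<close>

definition strip_x :: "face \<Rightarrow> int" where "strip_x F = Min (fst ` F)"
definition strip_y :: "face \<Rightarrow> int" where "strip_y F = Min (snd ` F)"
definition strip_s :: "face \<Rightarrow> int" where "strip_s F = Min ((\<lambda>p. fst p + snd p) ` F)"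

lemma strips_up_face [simp]:
  "strip_x (up_face a b) = a" "strip_y (up_face a b) = b" "strip_s (up_face a b) = a + b"
  unfolding strip_x_def strip_y_def strip_s_def up_face_def by (simp_all add: min_def)

lemma strips_down_face [simp]:
  "strip_x (down_face a b) = a" "strip_y (down_face a b) = b" "strip_s (down_face a b) = a + b + 1"
  unfolding strip_x_def strip_y_def strip_s_def down_face_def by (simp_all add: min_def)

lemma strip_s_bounds:
  "is_face F \<Longrightarrow> strip_x F + strip_y F \<le> strip_s F \<and> strip_s F \<le> strip_x F + strip_y F + 1"
  by (erule is_faceE) auto

lemma adjacent_strips_close:
  assumes "adjacent F G"
  shows "\<bar>strip_x F - strip_x G\<bar> \<le> 1" "\<bar>strip_y F - strip_y G\<bar> \<le> 1" "\<bar>strip_s F - strip_s G\<bar> \<le> 1"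
proof -
  have "is_face F" using assms unfolding adjacent_def by simp
  then have "\<bar>strip_x F - strip_x G\<bar> \<le> 1 \<and> \<bar>strip_y F - strip_y G\<bar> \<le> 1 \<and>
      \<bar>strip_s F - strip_s G\<bar> \<le> 1"
    by (cases rule: is_faceE)
      (use assms in \<open>auto simp: adjacent_up_face_iff adjacent_down_face_iff\<close>)
  then show "\<bar>strip_x F - strip_x G\<bar> \<le> 1" "\<bar>strip_y F - strip_y G\<bar> \<le> 1"
    "\<bar>strip_s F - strip_s G\<bar> \<le> 1"
    by simp_all
qed

text \<open>The faces of a strip, enumerated so that consecutive faces share an edge.\<close>

definition face_x :: "int \<Rightarrow> int \<Rightarrow> face" where
  "face_x t p = (if even p then up_face t (p div 2) else down_face t (p div 2))"
definition face_y :: "int \<Rightarrow> int \<Rightarrow> face" where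
  "face_y t p = (if even p then up_face (p div 2) t else down_face (p div 2) t)"
definition face_s :: "int \<Rightarrow> int \<Rightarrow> face" where
  "face_s t p =
     (if even p then up_face (p div 2) (t - p div 2) else down_face (p div 2) (t - p div 2 - 1))"

lemma int_even_odd_cases:
  fixes p :: int
  obtains q where "p = 2 * q" | q where "p = 2 * q + 1"
  by (metis oddE evenE)

lemma face_in_strip:
  assumes "is_face F"
  shows "(\<exists>p. F = face_x (strip_x F) p) \<and> (\<exists>p. F = face_y (strip_y F) p) \<and>
    (\<exists>p. F = face_s (strip_s F) p)"
  using assms
proof (cases rule: is_faceE)
  case (1 a b)
  then have "F = face_x (strip_x F) (2*b)" "F = face_y (strip_y F) (2*a)"
    "F = face_s (strip_s F) (2*a)"
    by (simp_all add: face_x_def face_y_def face_s_def)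
  then show ?thesis by blast
next
  case (2 a b)
  then have "F = face_x (strip_x F) (2*b+1)" "F = face_y (strip_y F) (2*a+1)"
    "F = face_s (strip_s F) (2*a+1)"
    by (simp_all add: face_x_def face_y_def face_s_def)
  then show ?thesis by blast
qed

lemma inj_face_strip: "inj (face_x t) \<and> inj (face_y t) \<and> inj (face_s t)"
  unfolding inj_def face_x_def face_y_def face_s_def
  by (auto split: if_splits elim!: evenE oddE)

lemma adjacent_face_strip:
  "adjacent (face_x t p) (face_x t (p+1))" "adjacent (face_y t p) (face_y t (p+1))"
  "adjacent (face_s t p) (face_s t (p+1))"
  by (cases p rule: int_even_odd_cases;
      simp add: face_x_def face_y_def face_s_def adjacent_up_face_iff adjacent_down_face_iff)+

lemma edge_strip_x:
  "face_x t p \<inter> face_x t (p+1) = (if even p then ant t (p div 2) else hor t (p div 2 + 1))"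
  by (cases p rule: int_even_odd_cases)
    (auto simp: face_x_def ant_def hor_def up_face_def down_face_def)

lemma edge_strip_y:
  "face_y t p \<inter> face_y t (p+1) = (if even p then ant (p div 2) t else ver (p div 2 + 1) t)"
  by (cases p rule: int_even_odd_cases)
    (auto simp: face_y_def ant_def ver_def up_face_def down_face_def)

lemma edge_strip_s:
  "face_s t p \<inter> face_s t (p+1) =
     (if even p then hor (p div 2) (t - p div 2) else ver (p div 2 + 1) (t - p div 2 - 1))"
  by (cases p rule: int_even_odd_cases)
    (auto simp: face_s_def hor_def ver_def up_face_def down_face_def)

definition boundary_edges :: "face set \<Rightarrow> pt set set" where
  "boundary_edges P = {F \<inter> G | F G. F \<in> P \<and> G \<notin> P \<and> adjacent F G}"

lemma edge_perimeter_eq_card_boundary_edges: "edge_perimeter P = card (boundary_edges P)"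
  unfolding edge_perimeter_def boundary_edges_def ..

lemma finite_boundary_edges: "finite P \<Longrightarrow> \<forall>F\<in>P. finite F \<Longrightarrow> finite (boundary_edges P)"
  by (rule finite_subset[of _ "Pow (\<Union>P)"]) (auto simp: boundary_edges_def)

lemma strip_end_edges_boundary:
  fixes f :: "int \<Rightarrow> face"
  assumes fin: "finite (f -` P)" and ne: "f -` P \<noteq> {}" and adj: "\<And>p. adjacent (f p) (f (p+1))"
  shows "f (Max (f -` P)) \<inter> f (Max (f -` P) + 1) \<in> boundary_edges P"
    and "f (Min (f -` P) - 1) \<inter> f (Min (f -` P)) \<in> boundary_edges P"
proof -
  have "Max (f -` P) \<in> f -` P" using fin ne by (rule Max_in)
  moreover have "Max (f -` P) + 1 \<notin> f -` P" using Max_ge[OF fin, of "Max (f -` P) + 1"] by linarith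
  ultimately show "f (Max (f -` P)) \<inter> f (Max (f -` P) + 1) \<in> boundary_edges P"
    using adj unfolding boundary_edges_def by blast
  have "Min (f -` P) \<in> f -` P" using fin ne by (rule Min_in)
  moreover have "Min (f -` P) - 1 \<notin> f -` P" using Min_le[OF fin, of "Min (f -` P) - 1"] by linarith
  moreover have "adjacent (f (Min (f -` P))) (f (Min (f -` P) - 1))"
    using adj[of "Min (f -` P) - 1"] adjacent_commute by simp
  ultimately have "f (Min (f -` P)) \<inter> f (Min (f -` P) - 1) \<in> boundary_edges P"
    unfolding boundary_edges_def by blast
  then show "f (Min (f -` P) - 1) \<inter> f (Min (f -` P)) \<in> boundary_edges P"
    by (simp add: Int_commute)
qed

text \<open>In every strip met by P, the edges leaving the first and the last face of P in that
  strip are two distinct boundary edges.\<close>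

lemma card_boundary_edges_in_strips:
  fixes f :: "int \<Rightarrow> int \<Rightarrow> face" and c :: "face \<Rightarrow> int"
  assumes fin: "finite P" "\<forall>F\<in>P. finite F"
    and in_strip: "\<And>F. F \<in> P \<Longrightarrow> \<exists>p. F = f (c F) p"
    and adj: "\<And>t p. adjacent (f t p) (f t (p+1))"
    and inj_f: "\<And>t. inj (f t)"
    and inj_edge: "inj (\<lambda>(t, p). f t p \<inter> f t (p+1))"
  shows "2 * card (c ` P) \<le> card (boundary_edges P \<inter> range (\<lambda>(t, p). f t p \<inter> f t (p+1)))"
proof -
  define e where "e = (\<lambda>(t, p). f t p \<inter> f t (p+1))"
  define S where "S t = f t -` P" for t
  have S_fin: "finite (S t)" for t
    unfolding S_def using fin(1) inj_f by (rule finite_vimageI)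
  have S_ne: "S t \<noteq> {}" if "t \<in> c ` P" for t
  proof -
    obtain F where F: "F \<in> P" "t = c F" using \<open>t \<in> c ` P\<close> by blast
    then obtain p where "F = f t p" using in_strip by blast
    then show ?thesis using F unfolding S_def by auto
  qed
  define last where "last t b = (if b then Max (S t) else Min (S t) - 1)" for t b
  define g where "g = (\<lambda>(t, b). e (t, last t b))"
  have inj_e: "inj e" using inj_edge unfolding e_def .
  have "inj_on g (c ` P \<times> UNIV)"
  proof (rule inj_onI)
    fix x y assume "x \<in> c ` P \<times> UNIV" "g x = g y"
    moreover obtain t b t' b' where xy: "x = (t, b)" "y = (t', b')" by fastforce
    ultimately have t: "t \<in> c ` P" and "e (t, last t b) = e (t', last t' b')"
      by (simp_all add: g_def)
    from injD[OF inj_e this(2)] have "(t, last t b) = (t', last t' b')" .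
    moreover have "Min (S t) \<le> Max (S t)" using S_ne[OF t] S_fin by simp
    ultimately show "x = y" unfolding xy last_def by (cases b; cases b') auto
  qed
  then have "card (g ` (c ` P \<times> UNIV)) = 2 * card (c ` P)"
    by (simp add: card_image card_cartesian_product)
  moreover have "g ` (c ` P \<times> UNIV) \<subseteq> boundary_edges P \<inter> range e"
    using strip_end_edges_boundary[OF S_fin[unfolded S_def] S_ne[unfolded S_def] adj]
    by (auto simp: g_def e_def last_def S_def)
  then have "card (g ` (c ` P \<times> UNIV)) \<le> card (boundary_edges P \<inter> range e)"
    using finite_boundary_edges[OF fin] by (intro card_mono) auto
  ultimately show ?thesis unfolding e_def by simp
qed

text \<open>Each edge direction occurs in two of the three strip families, so every boundary edge is
  counted at most twice.\<close>

lemma strips_le_edge_perimeter: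
  assumes "finite P" and faces: "\<forall>F\<in>P. is_face F"
  shows "card (strip_x ` P) + card (strip_y ` P) + card (strip_s ` P) \<le> edge_perimeter P"
proof -
  have fin: "finite P" "\<forall>F\<in>P. finite F" using assms finite_face by blast+
  define B where "B = boundary_edges P"
  define Ant where "Ant = B \<inter> {ant x y | x y. True}"
  define Hor where "Hor = B \<inter> {hor x y | x y. True}"
  define Ver where "Ver = B \<inter> {ver x y | x y. True}"
  have finB: "finite B" unfolding B_def using finite_boundary_edges[OF fin] .
  have family: "2 * card (c ` P) \<le> card E1 + card E2"
    if "\<And>F. F \<in> P \<Longrightarrow> \<exists>p. F = f (c F) p" "\<And>t p. adjacent (f t p) (f t (p+1))" "\<And>t. inj (f t)"
      "inj (\<lambda>(t, p). f t p \<inter> f t (p+1))" "B \<inter> range (\<lambda>(t, p). f t p \<inter> f t (p+1)) \<subseteq> E1 \<union> E2"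
      "E1 \<subseteq> B" "E2 \<subseteq> B"
    for f :: "int \<Rightarrow> int \<Rightarrow> face" and c E1 E2
  proof -
    have "2 * card (c ` P) \<le> card (B \<inter> range (\<lambda>(t, p). f t p \<inter> f t (p+1)))"
      unfolding B_def using that(1-4) by (rule card_boundary_edges_in_strips[OF fin])
    also have "\<dots> \<le> card (E1 \<union> E2)"
      using that(5-7) finB by (intro card_mono) (auto intro: finite_subset)
    also have "\<dots> \<le> card E1 + card E2" by (rule card_Un_le)
    finally show ?thesis .
  qed
  have inj_edges: "inj (\<lambda>(t, p). face_x t p \<inter> face_x t (p+1))"
    "inj (\<lambda>(t, p). face_y t p \<inter> face_y t (p+1))" "inj (\<lambda>(t, p). face_s t p \<inter> face_s t (p+1))"
    unfolding inj_def edge_strip_x edge_strip_y edge_strip_s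
    by (auto split: if_splits elim!: evenE oddE)
  have x: "2 * card (strip_x ` P) \<le> card Ant + card Hor"
    by (rule family[OF _ _ _ inj_edges(1)])
      (use faces face_in_strip inj_face_strip adjacent_face_strip in
        \<open>auto simp: Ant_def Hor_def edge_strip_x split: if_splits\<close>)
  have y: "2 * card (strip_y ` P) \<le> card Ant + card Ver"
    by (rule family[OF _ _ _ inj_edges(2)])
      (use faces face_in_strip inj_face_strip adjacent_face_strip in
        \<open>auto simp: Ant_def Ver_def edge_strip_y split: if_splits\<close>)
  have s: "2 * card (strip_s ` P) \<le> card Hor + card Ver"
    by (rule family[OF _ _ _ inj_edges(3)])
      (use faces face_in_strip inj_face_strip adjacent_face_strip in
        \<open>auto simp: Hor_def Ver_def edge_strip_s split: if_splits\<close>)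
  have "card Ant + card Hor + card Ver = card (Ant \<union> Hor \<union> Ver)"
    unfolding Ant_def Hor_def Ver_def using finB by (subst card_Un_disjoint; auto)+
  also have "\<dots> \<le> card B" unfolding Ant_def Hor_def Ver_def using finB by (intro card_mono) auto
  finally show ?thesis using x y s unfolding B_def edge_perimeter_eq_card_boundary_edges by linarith
qed

subsection \<open>The bounding hexagon\<close>

lemma polyiamond_image_interval:
  fixes c :: "face \<Rightarrow> int"
  assumes P: "polyiamond P" and lip: "\<And>F G. adjacent F G \<Longrightarrow> \<bar>c F - c G\<bar> \<le> 1"
  shows "c ` P = {Min (c ` P)..Max (c ` P)}"
proof
  have fin: "finite (c ` P)" and ne: "c ` P \<noteq> {}" using P unfolding polyiamond_def by auto
  then show "c ` P \<subseteq> {Min (c ` P)..Max (c ` P)}" by auto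
  obtain F where F: "F \<in> P" "c F = Min (c ` P)" using Min_in[OF fin ne] by auto
  obtain G where G: "G \<in> P" "c G = Max (c ` P)" using Max_in[OF fin ne] by auto
  have "(F, G) \<in> {(X, Y). X \<in> P \<and> Y \<in> P \<and> adjacent X Y}\<^sup>*"
    using P F G unfolding polyiamond_def by blast
  then have "{c F..c G} \<subseteq> c ` P"
  proof (induction rule: rtrancl_induct)
    case base
    then show ?case using F(1) by auto
  next
    case (step H H')
    then have "H' \<in> P" "\<bar>c H - c H'\<bar> \<le> 1" using lip by auto
    then have "{c F..c H'} \<subseteq> {c F..c H} \<union> {c H'}" by auto
    then show ?case using step.IH \<open>H' \<in> P\<close> by blast
  qed
  then show "{Min (c ` P)..Max (c ` P)} \<subseteq> c ` P" using F G by simp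
qed

lemma card_polyiamond_image:
  fixes c :: "face \<Rightarrow> int"
  assumes "polyiamond P" and "\<And>F G. adjacent F G \<Longrightarrow> \<bar>c F - c G\<bar> \<le> 1"
  shows "int (card (c ` P)) = Max (c ` P) - Min (c ` P) + 1"
proof -
  have "finite (c ` P)" "c ` P \<noteq> {}" using assms(1) unfolding polyiamond_def by auto
  then have "Min (c ` P) \<le> Max (c ` P)" using Min_in Max_ge by blast
  moreover have "card (c ` P) = card {Min (c ` P)..Max (c ` P)}"
    using polyiamond_image_interval[OF assms] by (rule arg_cong)
  ultimately show ?thesis by simp
qed

lemma T_mem_up_face [simp]:
  "up_face x y \<in> T d a b c \<longleftrightarrow>
     0 \<le> x \<and> 0 \<le> y \<and> x \<le> d - b - 1 \<and> y \<le> d - c - 1 \<and> a \<le> x + y \<and> x + y \<le> d - 1"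
  unfolding T_def by auto

lemma T_mem_down_face [simp]:
  "down_face x y \<in> T d a b c \<longleftrightarrow>
     0 \<le> x \<and> 0 \<le> y \<and> x \<le> d - b - 1 \<and> y \<le> d - c - 1 \<and> a - 1 \<le> x + y \<and> x + y \<le> d - 2"
  unfolding T_def by auto

lemma T_faceE:
  assumes "F \<in> T d a b c"
  obtains x y where "F = up_face x y" | x y where "F = down_face x y"
  using assms unfolding T_def by blast

definition translate :: "int \<Rightarrow> int \<Rightarrow> pt \<Rightarrow> pt" where
  "translate u v = (\<lambda>(x, y). (x + u, y + v))"

lemma translate_up_face: "translate u v ` up_face x y = up_face (x + u) (y + v)"
  and translate_down_face: "translate u v ` down_face x y = down_face (x + u) (y + v)"
  unfolding translate_def up_face_def down_face_def by (auto simp: algebra_simps)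

text \<open>The hexagon below has its sides on the lattice lines x = i0, x = i1 + 1, y = j0,
  y = j1 + 1, x + y = k0 and x + y = k1 + 1.\<close>

lemma face_in_bounding_hexagon:
  assumes "is_face F" and "i0 \<le> strip_x F" "strip_x F \<le> i1" "j0 \<le> strip_y F" "strip_y F \<le> j1"
    "k0 \<le> strip_s F" "strip_s F \<le> k1"
  shows "F \<in> (\<lambda>F. translate i0 j0 ` F) `
    T (k1 - i0 - j0 + 1) (k0 - i0 - j0) (k1 - j0 - i1) (k1 - i0 - j1)"
  using assms(1)
proof (cases rule: is_faceE)
  case (1 x y)
  then have "up_face (x - i0) (y - j0) \<in>
      T (k1 - i0 - j0 + 1) (k0 - i0 - j0) (k1 - j0 - i1) (k1 - i0 - j1)"
    using assms by auto
  then show ?thesis unfolding 1 by (rule rev_image_eqI) (simp add: translate_up_face)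
next
  case (2 x y)
  then have "down_face (x - i0) (y - j0) \<in>
      T (k1 - i0 - j0 + 1) (k0 - i0 - j0) (k1 - j0 - i1) (k1 - i0 - j1)"
    using assms by auto
  then show ?thesis unfolding 2 by (rule rev_image_eqI) (simp add: translate_down_face)
qed

lemma polyiamond_bounding_hexagon:
  assumes P: "polyiamond P"
  obtains d a b c u v where "0 \<le> a" "0 \<le> b" "0 \<le> c" "a + b \<le> d" "b + c \<le> d" "a + c \<le> d"
    and "P \<subseteq> (\<lambda>F. translate u v ` F) ` T d a b c"
    and "3 * d - a - b - c \<le> int (edge_perimeter P)"
proof -
  define i0 i1 j0 j1 k0 k1 where "i0 = Min (strip_x ` P)" "i1 = Max (strip_x ` P)"
    "j0 = Min (strip_y ` P)" "j1 = Max (strip_y ` P)"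
    "k0 = Min (strip_s ` P)" "k1 = Max (strip_s ` P)"
  have fin: "finite P" and faces: "\<forall>F\<in>P. is_face F" using P unfolding polyiamond_def by auto
  have bounds: "i0 \<le> strip_x F \<and> strip_x F \<le> i1 \<and> j0 \<le> strip_y F \<and> strip_y F \<le> j1 \<and>
      k0 \<le> strip_s F \<and> strip_s F \<le> k1" if "F \<in> P" for F
    using fin that unfolding i0_i1_j0_j1_k0_k1_def by auto
  have attained: "\<exists>F\<in>P. strip_x F = i0" "\<exists>F\<in>P. strip_x F = i1" "\<exists>F\<in>P. strip_y F = j0"
    "\<exists>F\<in>P. strip_y F = j1" "\<exists>F\<in>P. strip_s F = k0" "\<exists>F\<in>P. strip_s F = k1"
    using P unfolding polyiamond_def i0_i1_j0_j1_k0_k1_def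
    by (metis (mono_tags, lifting) Max_in Min_in finite_imageI image_iff image_is_empty)+
  have s_bounds: "strip_x F + strip_y F \<le> strip_s F \<and> strip_s F \<le> strip_x F + strip_y F + 1"
    if "F \<in> P" for F
    using strip_s_bounds faces that by blast
  have "int (card (strip_x ` P)) = i1 - i0 + 1" "int (card (strip_y ` P)) = j1 - j0 + 1"
    "int (card (strip_s ` P)) = k1 - k0 + 1"
    unfolding i0_i1_j0_j1_k0_k1_def using adjacent_strips_close
    by (intro card_polyiamond_image[OF P]; blast)+
  moreover have "int (card (strip_x ` P)) + int (card (strip_y ` P)) + int (card (strip_s ` P))
      \<le> int (edge_perimeter P)"
    unfolding of_nat_add[symmetric] of_nat_le_iff by (rule strips_le_edge_perimeter[OF fin faces])
  ultimately have "3 * (k1 - i0 - j0 + 1) - (k0 - i0 - j0) - (k1 - j0 - i1) - (k1 - i0 - j1)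
      \<le> int (edge_perimeter P)"
    by (simp add: algebra_simps)
  moreover have "P \<subseteq> (\<lambda>F. translate i0 j0 ` F) `
      T (k1 - i0 - j0 + 1) (k0 - i0 - j0) (k1 - j0 - i1) (k1 - i0 - j1)"
    using faces bounds by (blast intro: face_in_bounding_hexagon)
  moreover have "0 \<le> k0 - i0 - j0" "0 \<le> k1 - j0 - i1" "0 \<le> k1 - i0 - j1"
    "(k0 - i0 - j0) + (k1 - j0 - i1) \<le> k1 - i0 - j0 + 1"
    "(k1 - j0 - i1) + (k1 - i0 - j1) \<le> k1 - i0 - j0 + 1"
    "(k0 - i0 - j0) + (k1 - i0 - j1) \<le> k1 - i0 - j0 + 1"
    using attained bounds s_bounds by fastforce+
  ultimately show ?thesis by (intro that)
qed

subsection \<open>Area of the hexagons\<close>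

definition lattice_triangle :: "int \<Rightarrow> int \<Rightarrow> int \<Rightarrow> pt set" where
  "lattice_triangle u v n = {(x, y). u \<le> x \<and> v \<le> y \<and> x - u + (y - v) \<le> n - 1}"

lemma lattice_triangle_translate: "lattice_triangle u v n = translate u v ` lattice_triangle 0 0 n"
proof (intro set_eqI iffI)
  fix p assume p: "p \<in> lattice_triangle u v n"
  obtain x y where xy: "p = (x, y)" by fastforce
  show "p \<in> translate u v ` lattice_triangle 0 0 n"
    using p unfolding xy
    by (intro rev_image_eqI[of "(x - u, y - v)"]) (auto simp: lattice_triangle_def translate_def)
qed (auto simp: lattice_triangle_def translate_def)

lemma finite_lattice_triangle: "finite (lattice_triangle u v n)"
proof -
  have "lattice_triangle 0 0 n \<subseteq> {0..\<bar>n\<bar>} \<times> {0..\<bar>n\<bar>}" unfolding lattice_triangle_def by auto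
  then have "finite (lattice_triangle 0 0 n)" by (rule finite_subset) simp
  then show ?thesis by (subst lattice_triangle_translate) simp
qed

lemma card_lattice_triangle_nat: "2 * card (lattice_triangle 0 0 (int k)) = k * (k + 1)"
proof (induction k)
  case 0
  have "lattice_triangle 0 0 0 = {}" unfolding lattice_triangle_def by auto
  then show ?case by simp
next
  case (Suc k)
  define D where "D = (\<lambda>x. (x, int k - x)) ` {0..int k}"
  have "lattice_triangle 0 0 (int (Suc k)) = lattice_triangle 0 0 (int k) \<union> D"
    unfolding lattice_triangle_def D_def by (auto simp: image_iff)
  moreover have "lattice_triangle 0 0 (int k) \<inter> D = {}" unfolding lattice_triangle_def D_def by auto
  moreover have "card D = Suc k" unfolding D_def by (subst card_image) (auto simp: inj_on_def)
  ultimately show ?case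
    using Suc finite_lattice_triangle by (simp add: card_Un_disjoint D_def)
qed

lemma card_lattice_triangle:
  assumes "-1 \<le> n"
  shows "2 * int (card (lattice_triangle u v n)) = n * (n + 1)"
proof -
  have "card (lattice_triangle u v n) = card (lattice_triangle 0 0 n)"
    by (subst lattice_triangle_translate, rule card_image) (auto simp: inj_on_def translate_def)
  moreover have "2 * int (card (lattice_triangle 0 0 n)) = n * (n + 1)"
  proof (cases "0 \<le> n")
    case True
    then obtain k where "n = int k" using nonneg_eq_int by blast
    then show ?thesis
      using card_lattice_triangle_nat[of k] by (metis of_nat_mult of_nat_numeral of_nat_1 of_nat_add)
  next
    case False
    then have "n = -1" "lattice_triangle 0 0 n = {}"
      using assms unfolding lattice_triangle_def by auto
    then show ?thesis by simp
  qed
  ultimately show ?thesis by simp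
qed

lemma card_Diff_disjoint_Un3:
  assumes "finite X" "A \<subseteq> X" "B \<subseteq> X" "C \<subseteq> X" "A \<inter> B = {}" "A \<inter> C = {}" "B \<inter> C = {}"
  shows "int (card (X - (A \<union> B \<union> C))) = int (card X) - int (card A) - int (card B) - int (card C)"
proof -
  have "finite A" "finite B" "finite C" using assms finite_subset by blast+
  then have "card (A \<union> B \<union> C) = card A + card B + card C"
    using assms by (simp add: card_Un_disjoint Int_Un_distrib2)
  moreover have "card (X - (A \<union> B \<union> C)) = card X - card (A \<union> B \<union> C)"
    using assms by (intro card_Diff_subset) (auto intro: finite_subset)
  moreover have "card (A \<union> B \<union> C) \<le> card X" using assms by (intro card_mono) auto
  ultimately show ?thesis by simp
qed

lemma finite_T: "finite (T d a b c)"
proof -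
  have "T d a b c \<subseteq>
      (\<lambda>(x, y). up_face x y) ` ({0..d} \<times> {0..d}) \<union> (\<lambda>(x, y). down_face x y) ` ({0..d} \<times> {0..d})"
    unfolding T_def by force
  then show ?thesis by (rule finite_subset) auto
qed

text \<open>Lower corners of the up faces of T d a b c fill the triangle of side d minus corner
  triangles of sides a, b, c; those of the down faces fill the triangle of side d - 1 minus corners
  of sides a - 1, b - 1, c - 1.\<close>

lemma card_T:
  assumes "0 \<le> a" "0 \<le> b" "0 \<le> c" "a + b \<le> d" "b + c \<le> d" "a + c \<le> d"
  shows "int (card (T d a b c)) = d^2 - a^2 - b^2 - c^2"
proof -
  define L where "L k = lattice_triangle 0 0 (d - k) - (lattice_triangle 0 0 (a - k) \<union>
    lattice_triangle (d - b) 0 (b - k) \<union> lattice_triangle 0 (d - c) (c - k))" for k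
  have card_L:
    "2 * int (card (L k)) = (d-k)*(d-k+1) - (a-k)*(a-k+1) - (b-k)*(b-k+1) - (c-k)*(c-k+1)"
    if "k \<in> {0, 1}" for k
  proof -
    have "int (card (L k)) = int (card (lattice_triangle 0 0 (d - k))) -
        int (card (lattice_triangle 0 0 (a - k))) -
        int (card (lattice_triangle (d - b) 0 (b - k))) -
        int (card (lattice_triangle 0 (d - c) (c - k)))"
      unfolding L_def using assms that
      by (intro card_Diff_disjoint_Un3 finite_lattice_triangle) (auto simp: lattice_triangle_def)
    moreover have "2 * int (card (lattice_triangle 0 0 (d - k))) = (d-k)*(d-k+1)"
      "2 * int (card (lattice_triangle 0 0 (a - k))) = (a-k)*(a-k+1)"
      "2 * int (card (lattice_triangle (d - b) 0 (b - k))) = (b-k)*(b-k+1)"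
      "2 * int (card (lattice_triangle 0 (d - c) (c - k))) = (c-k)*(c-k+1)"
      using assms that by (intro card_lattice_triangle; auto)+
    ultimately show ?thesis by linarith
  qed
  have "T d a b c = (\<lambda>(x, y). up_face x y) ` L 0 \<union> (\<lambda>(x, y). down_face x y) ` L 1"
    unfolding T_def L_def lattice_triangle_def using assms by (auto simp: image_iff)
  moreover have "finite (L k)" for k unfolding L_def by (simp add: finite_lattice_triangle)
  ultimately have "card (T d a b c) =
      card ((\<lambda>(x, y). up_face x y) ` L 0) + card ((\<lambda>(x, y). down_face x y) ` L 1)"
    by (auto intro: card_Un_disjoint)
  also have "\<dots> = card (L 0) + card (L 1)"
    by (subst (1 2) card_image) (auto simp: inj_on_def)
  finally show ?thesis using card_L[of 0] card_L[of 1] by (simp add: power2_eq_square algebra_simps)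
qed

lemma card_translate_T:
  assumes "0 \<le> a" "0 \<le> b" "0 \<le> c" "a + b \<le> d" "b + c \<le> d" "a + c \<le> d"
  shows "int (card ((\<lambda>F. translate u v ` F) ` T d a b c)) = d^2 - a^2 - b^2 - c^2"
proof -
  have "inj (translate u v)" by (auto simp: inj_def translate_def)
  then have "inj (\<lambda>F. translate u v ` F)" by (simp add: inj_image_eq_iff inj_def)
  then show ?thesis using card_T[OF assms] by (simp add: card_image inj_on_subset)
qed

subsection \<open>Symmetries of the hexagons\<close>

definition lattice_congruent :: "face set \<Rightarrow> face set \<Rightarrow> bool" where
  "lattice_congruent X Y \<longleftrightarrow> (\<exists>g. lattice_symmetry g \<and> X = (\<lambda>F. g ` F) ` Y)"

lemma lattice_symmetryI:
  assumes "\<And>p. g (h p) = p" "\<And>p. h (g p) = p" "\<And>p q. sqdist (g p) (g q) = sqdist p q"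
  shows "lattice_symmetry g"
  unfolding lattice_symmetry_def using assms by (metis bij_betw_byWitness top_greatest)

lemma lattice_congruent_refl: "lattice_congruent X X"
  unfolding lattice_congruent_def lattice_symmetry_def by (intro exI[of _ id]) simp

lemma lattice_congruent_trans:
  assumes "lattice_congruent X Y" "lattice_congruent Y Z"
  shows "lattice_congruent X Z"
proof -
  obtain g h where g: "lattice_symmetry g" "X = (\<lambda>F. g ` F) ` Y"
    and h: "lattice_symmetry h" "Y = (\<lambda>F. h ` F) ` Z"
    using assms unfolding lattice_congruent_def by blast
  have "lattice_symmetry (g \<circ> h)"
    using g(1) h(1) unfolding lattice_symmetry_def by (simp add: bij_comp del: split_paired_All)
  moreover have "X = (\<lambda>F. (g \<circ> h) ` F) ` Z" unfolding g(2) h(2) by (auto simp: image_comp)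
  ultimately show ?thesis unfolding lattice_congruent_def by blast
qed

lemma lattice_congruent_translate: "lattice_congruent ((\<lambda>F. translate u v ` F) ` X) X"
proof -
  have "lattice_symmetry (translate u v)"
    by (rule lattice_symmetryI[of _ "translate (-u) (-v)"]) (auto simp: translate_def sqdist_def)
  then show ?thesis unfolding lattice_congruent_def by blast
qed

definition rotate :: "int \<Rightarrow> pt \<Rightarrow> pt" where "rotate d = (\<lambda>(x, y). (d - x - y, x))"
definition reflect :: "pt \<Rightarrow> pt" where "reflect = (\<lambda>(x, y). (y, x))"
definition point_reflect :: "int \<Rightarrow> int \<Rightarrow> pt \<Rightarrow> pt" where
  "point_reflect u v = (\<lambda>(x, y). (u - x, v - y))"

lemma lattice_symmetry_rotate: "lattice_symmetry (rotate d)"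
  by (rule lattice_symmetryI[of _ "\<lambda>(x, y). (y, d - x - y)"])
    (auto simp: rotate_def sqdist_def Let_def algebra_simps)

lemma lattice_symmetry_reflect: "lattice_symmetry reflect"
  by (rule lattice_symmetryI[of _ reflect])
    (auto simp: reflect_def sqdist_def Let_def algebra_simps)

lemma lattice_symmetry_point_reflect: "lattice_symmetry (point_reflect u v)"
  by (rule lattice_symmetryI[of _ "point_reflect u v"])
    (auto simp: point_reflect_def sqdist_def Let_def algebra_simps)

lemma image_T_eqI:
  assumes up: "\<And>x y. up_face x y \<in> T d a b c \<Longrightarrow> g ` up_face x y \<in> X"
    and down: "\<And>x y. down_face x y \<in> T d a b c \<Longrightarrow> g ` down_face x y \<in> X"
    and preimage: "\<And>G. G \<in> X \<Longrightarrow> \<exists>F \<in> T d a b c. G = g ` F"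
  shows "(\<lambda>F. g ` F) ` T d a b c = X"
proof
  show "(\<lambda>F. g ` F) ` T d a b c \<subseteq> X"
    by (auto elim: T_faceE intro: up down)
  show "X \<subseteq> (\<lambda>F. g ` F) ` T d a b c" using preimage by blast
qed

lemma T_rotate: "(\<lambda>F. rotate d ` F) ` T d a b c = T d c a b"
proof -
  have up: "rotate d ` up_face x y = up_face (d - x - y - 1) x"
    and down: "rotate d ` down_face x y = down_face (d - x - y - 2) x" for x y
    unfolding rotate_def up_face_def down_face_def by (auto simp: algebra_simps)
  show ?thesis
  proof (rule image_T_eqI)
    fix G assume "G \<in> T d c a b"
    then show "\<exists>F\<in>T d a b c. G = rotate d ` F"
    proof (cases rule: T_faceE)
      case (1 x y)
      then show ?thesis
        using \<open>G \<in> T d c a b\<close> by (intro bexI[of _ "up_face y (d - x - y - 1)"]) (auto simp: up)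
    next
      case (2 x y)
      then show ?thesis
        using \<open>G \<in> T d c a b\<close> by (intro bexI[of _ "down_face y (d - x - y - 2)"]) (auto simp: down)
    qed
  qed (auto simp: up down)
qed

lemma T_reflect: "(\<lambda>F. reflect ` F) ` T d a b c = T d a c b"
proof -
  have up: "reflect ` up_face x y = up_face y x" and down: "reflect ` down_face x y = down_face y x"
    for x y unfolding reflect_def up_face_def down_face_def by auto
  show ?thesis
  proof (rule image_T_eqI)
    fix G assume "G \<in> T d a c b"
    then show "\<exists>F\<in>T d a b c. G = reflect ` F"
    proof (cases rule: T_faceE)
      case (1 x y)
      then show ?thesis
        using \<open>G \<in> T d a c b\<close> by (intro bexI[of _ "up_face y x"]) (auto simp: up)
    next
      case (2 x y)
      then show ?thesis
        using \<open>G \<in> T d a c b\<close> by (intro bexI[of _ "down_face y x"]) (auto simp: down)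
    qed
  qed (auto simp: up down)
qed

text \<open>The point reflection exchanges up and down faces and turns T d a b c into the hexagon cut
  from the opposite triangle, whose corners are cut along the sides of T.\<close>

lemma T_point_reflect:
  "(\<lambda>F. point_reflect (d - b) (d - c) ` F) ` T d a b c =
     T (2*d - a - b - c) (d - b - c) (d - a - c) (d - a - b)"
proof -
  have up: "point_reflect u v ` up_face x y = down_face (u - x - 1) (v - y - 1)"
    and down: "point_reflect u v ` down_face x y = up_face (u - x - 1) (v - y - 1)" for u v x y
    unfolding point_reflect_def up_face_def down_face_def by (auto simp: algebra_simps)
  show ?thesis
  proof (rule image_T_eqI)
    fix G assume G: "G \<in> T (2*d - a - b - c) (d - b - c) (d - a - c) (d - a - b)"
    then show "\<exists>F\<in>T d a b c. G = point_reflect (d - b) (d - c) ` F"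
    proof (cases rule: T_faceE)
      case (1 x y)
      then show ?thesis using G
        by (intro bexI[of _ "down_face (d - b - x - 1) (d - c - y - 1)"]) (auto simp: down)
    next
      case (2 x y)
      then show ?thesis using G
        by (intro bexI[of _ "up_face (d - b - x - 1) (d - c - y - 1)"]) (auto simp: up)
    qed
  qed (auto simp: up down)
qed

lemma lattice_congruent_T_rotate: "lattice_congruent (T d a b c) (T d b c a)"
  using lattice_symmetry_rotate T_rotate[where a = b and b = c and c = a]
  unfolding lattice_congruent_def by metis

lemma lattice_congruent_T_reflect: "lattice_congruent (T d a b c) (T d a c b)"
  using lattice_symmetry_reflect T_reflect[where b = c and c = b]
  unfolding lattice_congruent_def by metis

lemma lattice_congruent_T_dual:
  "lattice_congruent (T d a b c) (T (2*d - a - b - c) (d - b - c) (d - a - c) (d - a - b))"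
proof -
  let ?d = "2*d - a - b - c" and ?a = "d - b - c" and ?b = "d - a - c" and ?c = "d - a - b"
  have "T (2*?d - ?a - ?b - ?c) (?d - ?b - ?c) (?d - ?a - ?c) (?d - ?a - ?b) = T d a b c" by simp
  then show ?thesis
    using lattice_symmetry_point_reflect
      T_point_reflect[where d = ?d and a = ?a and b = ?b and c = ?c]
    unfolding lattice_congruent_def by metis
qed

lemma T_congruent_sorted:
  fixes d a b c :: int
  obtains a' b' c' where "a' \<le> b'" "b' \<le> c'" "lattice_congruent (T d a b c) (T d a' b' c')"
    "a' + b' + c' = a + b + c" "a'^2 + b'^2 + c'^2 = a^2 + b^2 + c^2"
proof -
  have perm: "lattice_congruent (T d a b c) (T d a' b' c')"
    if "(a', b', c') \<in> {(a,b,c), (b,c,a), (c,a,b), (a,c,b), (c,b,a), (b,a,c)}" for a' b' c'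
  proof -
    have "lattice_congruent (T d a b c) (T d c a b)"
      by (rule lattice_congruent_trans[OF lattice_congruent_T_rotate lattice_congruent_T_rotate])
    moreover have "lattice_congruent (T d a b c) (T d c b a)"
      by (rule lattice_congruent_trans[OF lattice_congruent_T_reflect lattice_congruent_T_rotate])
    moreover have "lattice_congruent (T d a b c) (T d b a c)"
      by (rule lattice_congruent_trans[OF lattice_congruent_T_rotate lattice_congruent_T_reflect])
    ultimately show ?thesis
      using that lattice_congruent_refl[of "T d a b c"] lattice_congruent_T_rotate[of d a b c]
        lattice_congruent_T_reflect[of d a b c]
      by auto
  qed
  consider "a \<le> b" "b \<le> c" | "a \<le> c" "c \<le> b" | "b \<le> a" "a \<le> c" | "b \<le> c" "c \<le> a"
    | "c \<le> a" "a \<le> b" | "c \<le> b" "b \<le> a"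
    by linarith
  then show ?thesis
  proof cases
    case 1 then show ?thesis using that[of a b c] perm by auto
  next
    case 2 then show ?thesis using that[of a c b] perm by (auto simp: algebra_simps)
  next
    case 3 then show ?thesis using that[of b a c] perm by (auto simp: algebra_simps)
  next
    case 4 then show ?thesis using that[of b c a] perm by (auto simp: algebra_simps)
  next
    case 5 then show ?thesis using that[of c a b] perm by (auto simp: algebra_simps)
  next
    case 6 then show ?thesis using that[of c b a] perm by (auto simp: algebra_simps)
  qed
qed

text \<open>Duality changes d - (a + b + c) into its negative, so one of T d a b c and its dual has
  a + b + c \<le> d; both have the same perimeter and area.\<close>

lemma T_congruent_normal_form:
  fixes d a b c :: int
  obtains d' a' b' c' where "a' \<le> b'" "b' \<le> c'" "a' + b' + c' \<le> d'"
    "lattice_congruent (T d a b c) (T d' a' b' c')"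
    "3*d' - a' - b' - c' = 3*d - a - b - c" "d'^2 - a'^2 - b'^2 - c'^2 = d^2 - a^2 - b^2 - c^2"
proof (cases "a + b + c \<le> d")
  case True
  obtain a' b' c' where "a' \<le> b'" "b' \<le> c'" "lattice_congruent (T d a b c) (T d a' b' c')"
    "a' + b' + c' = a + b + c" "a'^2 + b'^2 + c'^2 = a^2 + b^2 + c^2"
    by (rule T_congruent_sorted)
  then show ?thesis using True that[of a' b' c' d] by auto
next
  case False
  define d1 a1 b1 c1 where "d1 = 2*d - a - b - c" "a1 = d - b - c" "b1 = d - a - c" "c1 = d - a - b"
  obtain a' b' c' where "a' \<le> b'" "b' \<le> c'" "lattice_congruent (T d1 a1 b1 c1) (T d1 a' b' c')"
    "a' + b' + c' = a1 + b1 + c1" "a'^2 + b'^2 + c'^2 = a1^2 + b1^2 + c1^2"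
    by (rule T_congruent_sorted)
  moreover have "lattice_congruent (T d a b c) (T d1 a1 b1 c1)"
    unfolding d1_a1_b1_c1_def by (rule lattice_congruent_T_dual)
  moreover have "d1^2 - a1^2 - b1^2 - c1^2 = d^2 - a^2 - b^2 - c^2"
    unfolding d1_a1_b1_c1_def by (simp add: power2_eq_square algebra_simps)
  ultimately show ?thesis
    using False that[of a' b' c' d1] lattice_congruent_trans[of "T d a b c" "T d1 a1 b1 c1"]
    unfolding d1_a1_b1_c1_def by auto
qed

subsection \<open>The hexagons are polyiamonds with perimeter 3d - a - b - c\<close>

context
  fixes d a b c :: int
  assumes nonneg: "0 \<le> a" "0 \<le> b" "0 \<le> c" and pairs: "a + b \<le> d" "b + c \<le> d" "a + c \<le> d"
begin

private definition "adj_T = {(X, Y). X \<in> T d a b c \<and> Y \<in> T d a b c \<and> adjacent X Y}"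

private lemma adj_T_two_steps:
  assumes "(Z, W) \<in> adj_T\<^sup>*" "X \<in> T d a b c" "Y \<in> T d a b c" "Z \<in> T d a b c"
    "adjacent X Y" "adjacent Y Z"
  shows "(X, W) \<in> adj_T\<^sup>*"
proof -
  have "(X, Y) \<in> adj_T" "(Y, Z) \<in> adj_T" using assms(2-6) unfolding adj_T_def by simp_all
  then show ?thesis using assms(1) by (metis converse_rtrancl_into_rtrancl)
qed

text \<open>Each up face is joined through a down face to an up face with smaller 3x + 2y, down to
  the up face on the side x + y = a with least x.\<close>

private lemma up_face_connected:
  defines "x0 \<equiv> max 0 (a - (d - c - 1))"
  assumes "up_face x y \<in> T d a b c"
  shows "(up_face x y, up_face x0 (a - x0)) \<in> adj_T\<^sup>*"
  using assms(2)
proof (induction "nat (3*x + 2*y)" arbitrary: x y rule: less_induct)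
  case less
  then have h: "0 \<le> x" "0 \<le> y" "x \<le> d - b - 1" "y \<le> d - c - 1" "a \<le> x + y" "x + y \<le> d - 1"
    by auto
  consider "a < x + y" "1 \<le> x" | "a < x + y" "x = 0" | "x + y = a" "1 \<le> x" "y + 1 \<le> d - c - 1"
    | "x = x0" "y = a - x0"
    using h unfolding x0_def by linarith
  then show ?case
  proof cases
    case 1
    then have "(up_face (x-1) y, up_face x0 (a - x0)) \<in> adj_T\<^sup>*"
      using less.hyps[of "x-1" y] h by auto
    then show ?thesis
      by (rule adj_T_two_steps[where Y = "down_face (x-1) y"])
        (use 1 h in \<open>auto simp: adjacent_up_face_iff adjacent_down_face_iff\<close>)
  next
    case 2
    then have "(up_face x (y-1), up_face x0 (a - x0)) \<in> adj_T\<^sup>*"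
      using less.hyps[of x "y-1"] h nonneg by auto
    then show ?thesis
      by (rule adj_T_two_steps[where Y = "down_face x (y-1)"])
        (use 2 h nonneg in \<open>auto simp: adjacent_up_face_iff adjacent_down_face_iff\<close>)
  next
    case 3
    then have "(up_face (x-1) (y+1), up_face x0 (a - x0)) \<in> adj_T\<^sup>*"
      using less.hyps[of "x-1" "y+1"] h by auto
    then show ?thesis
      by (rule adj_T_two_steps[where Y = "down_face (x-1) y"])
        (use 3 h in \<open>auto simp: adjacent_up_face_iff adjacent_down_face_iff\<close>)
  qed simp
qed

private lemma down_face_has_up_neighbour:
  assumes "a + b + c \<le> 2*d - 2" "down_face x y \<in> T d a b c"
  obtains x' y' where "up_face x' y' \<in> T d a b c" "adjacent (down_face x y) (up_face x' y')"
proof -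
  have h: "0 \<le> x" "0 \<le> y" "x \<le> d - b - 1" "y \<le> d - c - 1" "a - 1 \<le> x + y" "x + y \<le> d - 2"
    using assms(2) by auto
  consider "a \<le> x + y" | "x + 1 \<le> d - b - 1" "x + y = a - 1" | "y + 1 \<le> d - c - 1" "x + y = a - 1"
    using h assms(1) by linarith
  then show ?thesis
  proof cases
    case 1 then show ?thesis using h by (intro that[of x y]) (auto simp: adjacent_down_face_iff)
  next
    case 2 then show ?thesis using h by (intro that[of "x+1" y]) (auto simp: adjacent_down_face_iff)
  next
    case 3 then show ?thesis using h by (intro that[of x "y+1"]) (auto simp: adjacent_down_face_iff)
  qed
qed

lemma polyiamond_T:
  assumes "a + b + c \<le> 2*d - 2" "T d a b c \<noteq> {}"
  shows "polyiamond (T d a b c)"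
proof -
  define x0 where "x0 = max 0 (a - (d - c - 1))"
  have to_base: "(F, up_face x0 (a - x0)) \<in> adj_T\<^sup>*" if F: "F \<in> T d a b c" for F
    using F
  proof (cases rule: T_faceE)
    case (1 x y)
    then show ?thesis using up_face_connected F unfolding x0_def by simp
  next
    case (2 x y)
    then obtain x' y' where U: "up_face x' y' \<in> T d a b c" "adjacent F (up_face x' y')"
      using down_face_has_up_neighbour[OF assms(1), of x y] F unfolding 2 by blast
    then have "(F, up_face x' y') \<in> adj_T" using F unfolding adj_T_def by simp
    moreover have "(up_face x' y', up_face x0 (a - x0)) \<in> adj_T\<^sup>*"
      using up_face_connected[OF U(1)] unfolding x0_def .
    ultimately show ?thesis by (rule converse_rtrancl_into_rtrancl)
  qed
  have "adj_T\<inverse> = adj_T" unfolding adj_T_def using adjacent_commute by auto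
  then have "(F, G) \<in> adj_T\<^sup>*" if "F \<in> T d a b c" "G \<in> T d a b c" for F G
    using to_base[OF that(1)] to_base[OF that(2)] by (metis rtrancl_converseI rtrancl_trans)
  with assms(2) finite_T show ?thesis
    using assms(2) unfolding polyiamond_def adj_T_def by (auto elim: T_faceE)
qed

text \<open>Boundary edges of T d a b c lie on its six sides, of lengths a, d - a - b, b, d - b - c, c,
  d - c - a.\<close>

lemma edge_perimeter_T_le: "int (edge_perimeter (T d a b c)) \<le> 3*d - a - b - c"
proof -
  define S1 where "S1 = (\<lambda>x. ant x (d-1-x)) ` {c..d-b-1}"
  define S2 where "S2 = (\<lambda>y. ver 0 y) ` {a..d-c-1}"
  define S3 where "S3 = (\<lambda>x. hor x 0) ` {a..d-b-1}"
  define S4 where "S4 = (\<lambda>x. ant x (a-1-x)) ` {0..a-1}"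
  define S5 where "S5 = (\<lambda>y. ver (d-b) y) ` {0..b-1}"
  define S6 where "S6 = (\<lambda>x. hor x (d-c)) ` {0..c-1}"
  have sides: "boundary_edges (T d a b c) \<subseteq> S1 \<union> S2 \<union> S3 \<union> S4 \<union> S5 \<union> S6"
  proof
    fix e assume "e \<in> boundary_edges (T d a b c)"
    then obtain F G where e: "e = F \<inter> G" and FG: "F \<in> T d a b c" "G \<notin> T d a b c" "adjacent F G"
      unfolding boundary_edges_def by blast
    from FG(1) show "e \<in> S1 \<union> S2 \<union> S3 \<union> S4 \<union> S5 \<union> S6"
    proof (cases rule: T_faceE)
      case (1 x y)
      then have "G = down_face x y \<or> G = down_face (x-1) y \<or> G = down_face x (y-1)"
        using FG(3) adjacent_up_face_iff by blast
      then show ?thesis using FG(1,2) unfolding e 1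
        by (elim disjE; simp only: face_inter_face; auto simp: S1_def S2_def S3_def image_iff)
    next
      case (2 x y)
      then have "G = up_face x y \<or> G = up_face (x+1) y \<or> G = up_face x (y+1)"
        using FG(3) adjacent_down_face_iff by blast
      then show ?thesis using FG(1,2) unfolding e 2
        by (elim disjE; simp only: face_inter_face; auto simp: S4_def S5_def S6_def image_iff)
    qed
  qed
  have card_interval_image: "int (card (f ` {lo..hi})) \<le> hi - lo + 1"
    if "lo \<le> hi + 1" for f :: "int \<Rightarrow> pt set" and lo hi
    using card_image_le[of "{lo..hi}" f] that by simp
  have "card (boundary_edges (T d a b c)) \<le> card (S1 \<union> S2 \<union> S3 \<union> S4 \<union> S5 \<union> S6)"
    using sides by (intro card_mono) (simp_all add: S1_def S2_def S3_def S4_def S5_def S6_def)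
  also have "\<dots> \<le> card S1 + card S2 + card S3 + card S4 + card S5 + card S6"
    using card_Un_le[of "S1 \<union> S2 \<union> S3 \<union> S4 \<union> S5" S6] card_Un_le[of "S1 \<union> S2 \<union> S3 \<union> S4" S5]
      card_Un_le[of "S1 \<union> S2 \<union> S3" S4] card_Un_le[of "S1 \<union> S2" S3] card_Un_le[of S1 S2]
    by linarith
  finally have "int (edge_perimeter (T d a b c)) \<le>
      int (card S1) + int (card S2) + int (card S3) + int (card S4) + int (card S5) + int (card S6)"
    unfolding edge_perimeter_eq_card_boundary_edges by linarith
  moreover have "int (card S1) \<le> d - b - c" "int (card S2) \<le> d - c - a" "int (card S3) \<le> d - b - a"
    "int (card S4) \<le> a" "int (card S5) \<le> b" "int (card S6) \<le> c"
    unfolding S1_def S2_def S3_def S4_def S5_def S6_def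
    using nonneg pairs by (intro card_interval_image[THEN order_trans]; simp)+
  ultimately show ?thesis by linarith
qed

end

subsection \<open>Arithmetic of the minimal hexagons\<close>

definition quasi_regular_area :: "nat \<Rightarrow> nat \<Rightarrow> int" where
  "quasi_regular_area r m = 6 * int r ^ 2 + 2 * int m * int r + (if m > 0 then int m - 2 else 0)"

text \<open>Parameters (d, a, b, c) of E(r), E_B1(r), ..., E_B5(r), indexed by m = 0, ..., 5.\<close>

definition quasi_regular_params :: "nat \<Rightarrow> nat \<Rightarrow> int \<times> int \<times> int \<times> int" where
  "quasi_regular_params r m = (let r = int r in
     [(3*r, r, r, r), (3*r, r - 1, r, r), (3*r + 1, r, r, r + 1), (3*r + 1, r, r, r),
      (3*r + 2, r, r + 1, r + 1), (3*r + 2, r, r, r + 1)] ! m)"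

lemma quasi_regular_params_hexagon:
  assumes "1 \<le> r" "m \<le> 5" "quasi_regular_params r m = (d, a, b, c)"
  shows "T d a b c \<in> {E0 r, EB1 r, EB2 r, EB3 r, EB4 r, EB5 r}"
    and "d^2 - a^2 - b^2 - c^2 = quasi_regular_area r m"
    and "polyiamond (T d a b c)"
    and "int (edge_perimeter (T d a b c)) \<le> 6 * int r + int m"
    and "int (card (T d a b c)) = quasi_regular_area r m"
proof -
  have "m = 0 \<or> m = 1 \<or> m = 2 \<or> m = 3 \<or> m = 4 \<or> m = 5" using assms(2) by linarith
  then have "T d a b c \<in> {E0 r, EB1 r, EB2 r, EB3 r, EB4 r, EB5 r} \<and>
      d^2 - a^2 - b^2 - c^2 = quasi_regular_area r m \<and> 3*d - a - b - c = 6 * int r + int m \<and>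
      0 \<le> a \<and> 0 \<le> b \<and> 0 \<le> c \<and> a + b \<le> d \<and> b + c \<le> d \<and> a + c \<le> d \<and> a + b + c \<le> 2*d - 2 \<and>
      up_face a 0 \<in> T d a b c"
    using assms(1,3)
    by (elim disjE) (auto simp: quasi_regular_params_def Let_def quasi_regular_area_def
        E0_def EB1_def EB2_def EB3_def EB4_def EB5_def power2_eq_square algebra_simps)
  then have E: "T d a b c \<in> {E0 r, EB1 r, EB2 r, EB3 r, EB4 r, EB5 r}"
    and area: "d^2 - a^2 - b^2 - c^2 = quasi_regular_area r m"
    and perimeter: "3*d - a - b - c = 6 * int r + int m"
    and adm: "0 \<le> a" "0 \<le> b" "0 \<le> c" "a + b \<le> d" "b + c \<le> d" "a + c \<le> d" "a + b + c \<le> 2*d - 2"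
      "up_face a 0 \<in> T d a b c"
    by simp_all
  show "T d a b c \<in> {E0 r, EB1 r, EB2 r, EB3 r, EB4 r, EB5 r}"
    and "d^2 - a^2 - b^2 - c^2 = quasi_regular_area r m"
    using E area .
  have "T d a b c \<noteq> {}" using adm(8) by blast
  then show "polyiamond (T d a b c)" using adm(1-7) by (intro polyiamond_T)
  show "int (edge_perimeter (T d a b c)) \<le> 6 * int r + int m"
    using edge_perimeter_T_le[OF adm(1-6)] perimeter by linarith
  show "int (card (T d a b c)) = quasi_regular_area r m" using card_T[OF adm(1-6)] area by simp
qed

lemma hexagon_isoperimetric:
  fixes d a b c :: int
  shows "6 * (d^2 - a^2 - b^2 - c^2) \<le> (3*d - a - b - c)^2"
proof -
  have "(3*d - a - b - c)^2 - 6 * (d^2 - a^2 - b^2 - c^2) =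
      3 * (d - (a + b + c))^2 + 2 * ((a - b)^2 + (b - c)^2 + (c - a)^2)"
    by (simp add: power2_eq_square algebra_simps)
  moreover have "0 \<le> 3 * (d - (a + b + c))^2 + 2 * ((a - b)^2 + (b - c)^2 + (c - a)^2)" by simp
  ultimately show ?thesis by linarith
qed

lemma hexagon_perimeter_eq_minimal:
  fixes r m :: nat and d a b c :: int
  assumes "1 \<le> r" "m \<le> 5" "0 \<le> 3*d - a - b - c" "3*d - a - b - c \<le> 6 * int r + int m"
    and area: "quasi_regular_area r m \<le> d^2 - a^2 - b^2 - c^2"
  shows "3*d - a - b - c = 6 * int r + int m"
proof (rule ccontr)
  assume "3*d - a - b - c \<noteq> 6 * int r + int m"
  have "6 * quasi_regular_area r m \<le> 6 * (d^2 - a^2 - b^2 - c^2)" using area by simp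
  also have "\<dots> \<le> (3*d - a - b - c)^2" by (rule hexagon_isoperimetric)
  also have "\<dots> \<le> (6 * int r + int m - 1)^2"
    using assms(3,4) \<open>3*d - a - b - c \<noteq> 6 * int r + int m\<close> by (intro power_mono) auto
  finally have "12 * int r + 6 * (if m > 0 then int m - 2 else 0) \<le> (int m - 1)^2"
    unfolding quasi_regular_area_def by (simp add: power2_eq_square algebra_simps)
  moreover have "m = 0 \<or> m = 1 \<or> m = 2 \<or> m = 3 \<or> m = 4 \<or> m = 5" using assms(2) by linarith
  ultimately show False using assms(1) by auto
qed

lemma int_abs_le_1_if_square_le_3:
  fixes t :: int
  assumes "t^2 \<le> 3"
  shows "\<bar>t\<bar> \<le> 1"
proof (rule ccontr)
  assume "\<not> \<bar>t\<bar> \<le> 1"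
  then have "2 * 2 \<le> \<bar>t\<bar> * \<bar>t\<bar>" by (intro mult_mono) auto
  then show False using assms by (simp add: power2_eq_square)
qed

text \<open>Writing d = 3r + \<delta>, a = r + x, b = r + y, c = r + z, the area exceeds 6r^2 + 2mr by
  \<delta>^2 - x^2 - y^2 - z^2, while x + y + z = 3\<delta> - m; Cauchy-Schwarz then forces |2\<delta> - m| \<le> 1
  and x, y, z \<in> {-1, 0, 1}.\<close>

lemma quasi_regular_params_unique:
  fixes r m :: nat and d a b c :: int
  assumes m: "m \<le> 5" and sorted: "a \<le> b" "b \<le> c" "a + b + c \<le> d"
    and perimeter: "3*d - a - b - c = 6 * int r + int m"
    and area: "quasi_regular_area r m \<le> d^2 - a^2 - b^2 - c^2"
  shows "(d, a, b, c) = quasi_regular_params r m"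
proof -
  define \<delta> x y z where "\<delta> = d - 3 * int r" "x = a - int r" "y = b - int r" "z = c - int r"
  define cm where "cm = (if m > 0 then int m - 2 else 0)"
  have m_cases: "m = 0 \<or> m = 1 \<or> m = 2 \<or> m = 3 \<or> m = 4 \<or> m = 5" using m by linarith
  have sum: "x + y + z = 3*\<delta> - int m" using perimeter unfolding \<delta>_x_y_z_def by simp
  have "d^2 - a^2 - b^2 - c^2 =
      6 * int r ^ 2 + 2 * int r * (3*\<delta> - (x + y + z)) + (\<delta>^2 - x^2 - y^2 - z^2)"
    unfolding \<delta>_x_y_z_def by (simp add: power2_eq_square algebra_simps)
  also have "\<dots> = 6 * int r ^ 2 + 2 * int m * int r + (\<delta>^2 - x^2 - y^2 - z^2)"
    unfolding sum by simp
  finally have excess: "x^2 + y^2 + z^2 \<le> \<delta>^2 - cm"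
    using area unfolding quasi_regular_area_def cm_def by linarith
  have "(3*\<delta> - int m)^2 \<le> 3 * (x^2 + y^2 + z^2)"
  proof -
    have "3 * (x^2 + y^2 + z^2) - (x + y + z)^2 = (x - y)^2 + (y - z)^2 + (z - x)^2"
      by (simp add: power2_eq_square algebra_simps)
    then show ?thesis unfolding sum[symmetric] by (smt (verit) zero_le_power2)
  qed
  then have cauchy: "0 \<le> 3 * (\<delta>^2 - cm) - (3*\<delta> - int m)^2" using excess by (simp add: algebra_simps)
  have "3 * (2*\<delta> - int m)^2 = int m ^ 2 - 6 * cm - 2 * (3 * (\<delta>^2 - cm) - (3*\<delta> - int m)^2)"
    by (simp add: power2_eq_square algebra_simps)
  moreover have "int m ^ 2 - 6 * cm \<le> 7" using m_cases unfolding cm_def by auto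
  ultimately have "(2*\<delta> - int m)^2 \<le> 3" using cauchy by (smt (verit))
  then have "\<bar>2*\<delta> - int m\<bar> \<le> 1" by (rule int_abs_le_1_if_square_le_3)
  moreover have "2*\<delta> \<le> int m" using sorted sum unfolding \<delta>_x_y_z_def by simp
  ultimately have \<delta>: "\<delta> = int (m div 2)" by linarith
  have squares: "x^2 + y^2 + z^2 \<le> int (m div 2) ^ 2 - cm" using excess unfolding \<delta> .
  then have "x^2 + y^2 + z^2 \<le> 2" using m_cases unfolding cm_def by auto
  then have "\<bar>x\<bar> \<le> 1" "\<bar>y\<bar> \<le> 1" "\<bar>z\<bar> \<le> 1"
    by (intro int_abs_le_1_if_square_le_3; smt (verit) zero_le_power2)+
  then have "x \<in> {-1, 0, 1}" "y \<in> {-1, 0, 1}" "z \<in> {-1, 0, 1}" by auto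
  moreover have "x \<le> y" "y \<le> z" using sorted unfolding \<delta>_x_y_z_def by simp_all
  ultimately have "x = (if m = 1 then -1 else 0) \<and> y = (if m = 4 then 1 else 0) \<and>
      z = (if m = 2 \<or> m = 4 \<or> m = 5 then 1 else 0)"
    using m_cases squares sum unfolding \<delta> cm_def by (elim disjE) (auto simp: power2_eq_square)
  then show ?thesis
    using m_cases \<delta> unfolding quasi_regular_params_def Let_def \<delta>_x_y_z_def by (elim disjE) auto
qed

theorem lemma3p17:
  fixes r m :: nat and P :: "face set"
  assumes "r \<ge> 1" and "m \<le> 5"
    and "polyiamond P"
    and "int (area P) = 6 * int r ^ 2 + 2 * int m * int r + (if m > 0 then int m - 2 else 0)"
    and "\<forall>Q. polyiamond Q \<and> area Q = area P \<longrightarrow> edge_perimeter P \<le> edge_perimeter Q"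
  shows "quasi_regular P"
proof -
  have area_P: "int (card P) = quasi_regular_area r m"
    using assms(4) unfolding area_def quasi_regular_area_def .
  obtain d a b c where "quasi_regular_params r m = (d, a, b, c)" by (metis prod_cases4)
  note hexagon = quasi_regular_params_hexagon[OF assms(1,2) this]
  have "edge_perimeter P \<le> edge_perimeter (T d a b c)"
    using assms(5) hexagon(3,5) area_P unfolding area_def by simp
  then have perimeter_P: "int (edge_perimeter P) \<le> 6 * int r + int m" using hexagon(4) by linarith
  obtain D A B C u v where adm: "0 \<le> A" "0 \<le> B" "0 \<le> C" "A + B \<le> D" "B + C \<le> D" "A + C \<le> D"
    and cover: "P \<subseteq> (\<lambda>F. translate u v ` F) ` T D A B C"
    and bound: "3*D - A - B - C \<le> int (edge_perimeter P)"
    by (rule polyiamond_bounding_hexagon[OF assms(3)])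
  note card_cover = card_translate_T[OF adm, of u v]
  have card_le: "card P \<le> card ((\<lambda>F. translate u v ` F) ` T D A B C)"
    using cover finite_T by (intro card_mono) auto
  then have perimeter_eq: "3*D - A - B - C = 6 * int r + int m"
    using adm bound perimeter_P area_P card_cover
    by (intro hexagon_perimeter_eq_minimal[OF assms(1,2)]) auto
  obtain D' A' B' C' where "A' \<le> B'" "B' \<le> C'" "A' + B' + C' \<le> D'"
    and congruent: "lattice_congruent (T D A B C) (T D' A' B' C')"
    and "3*D' - A' - B' - C' = 3*D - A - B - C"
    and area_eq: "D'^2 - A'^2 - B'^2 - C'^2 = D^2 - A^2 - B^2 - C^2"
    by (rule T_congruent_normal_form)
  with card_le have "quasi_regular_params r m = (D', A', B', C')"
    using perimeter_eq area_P card_cover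
    by (intro quasi_regular_params_unique[OF assms(2), symmetric]) auto
  note hexagon' = quasi_regular_params_hexagon[OF assms(1,2) this]
  have "P = (\<lambda>F. translate u v ` F) ` T D A B C"
    using cover card_cover area_eq hexagon'(2) area_P finite_T
    by (intro card_seteq) auto
  then have "lattice_congruent P (T D' A' B' C')"
    using lattice_congruent_trans[OF lattice_congruent_translate congruent] by simp
  then show ?thesis
    using hexagon'(1) assms(1) unfolding quasi_regular_def lattice_congruent_def by blast
qed

end
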